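(* Assume the subexponential regime $a_T/T\to0$. Then the SVP predictor $\hat c_{\mathrm V}(x,\mathbb P,T)=c(x,\mathbb P)+\sqrt{\frac{2a_T}{T}\mathrm{Var}_{\mathbb P}(\ell(x,\xi))}$ satisfies the out-of-sample guarantee with speed $(a_T)$.
   Context: Setting: $\Sigma=\{1,\dots,d\}$ ($d\ge2$) is finite; $\mathcal P\subset\mathbb R^d$ is the probability simplex over $\Sigma$ and $\mathcal P^o$ its relative interior (all entries positive). $\mathcal X\subset\mathbb R^n$ is compact and $\ell:\mathcal X\times\Sigma\to\mathbb R$ is continuous in $x$ for each $i$. For $x\in\mathcal X$, $\mu\in\mathbb R^d$ let $c(x,\mu)=\sum_{i\in\Sigma}\ell(x,i)\mu(i)$, and $\mathrm{Var}_{\mathbb P}(\ell(x,\xi))=\sum_i\mathbb P(i)(\ell(x,i)-c(x,\mathbb P))^2$. Data $\xi_1,\xi_2,\dots$ are i.i.d. with law $\mathbb P\in\mathcal P$, $\mathbb P^\infty$ denotes their joint law, and $\hat{\mathbb P}_T(i)=\frac1T\sum_{t=1}^T\mathbf 1\{\xi_t=i\}$. $(a_T)_{T\ge1}$ is a sequence of positive reals with $a_T\to\infty$. Out-of-sample guarantee with speed $(a_T)$ for a predictor $\hat c$ (a sequence of functions $\hat c(\cdot,\cdot,T):\mathcal X\times\mathcal P\to\mathbb R$): for all $x\in\mathcal X$ and $\mathbb P\in\mathcal P^o$, $\limsup_{T\to\infty}\frac1{a_T}\log\mathbb P^\infty\big(c(x,\mathbb P)>\hat c(x,\hat{\mathbb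 P}_T,T)\big)\le-1$. *)

theory Defs
  imports "HOL-Analysis.Analysis" "HOL-Probability.Probability"
begin

text \<open>Alphabet Sigma = {1..d}; distributions mu are functions nat => real
  (only the entries on {1..d} matter).\<close>

definition cost :: "nat \<Rightarrow> ('x \<Rightarrow> nat \<Rightarrow> real) \<Rightarrow> 'x \<Rightarrow> (nat \<Rightarrow> real) \<Rightarrow> real" where
  "cost d loss x \<mu> = (\<Sum>i\<in>{1..d}. loss x i * \<mu> i)"

definition varc :: "nat \<Rightarrow> ('x \<Rightarrow> nat \<Rightarrow> real) \<Rightarrow> 'x \<Rightarrow> (nat \<Rightarrow> real) \<Rightarrow> real" where
  "varc d loss x \<mu> = (\<Sum>i\<in>{1..d}. \<mu> i * (loss x i - cost d loss x \<mu>)^2)"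

definition svp :: "nat \<Rightarrow> ('x \<Rightarrow> nat \<Rightarrow> real) \<Rightarrow> (nat \<Rightarrow> real) \<Rightarrow> 'x \<Rightarrow> (nat \<Rightarrow> real) \<Rightarrow> nat \<Rightarrow> real" where
  "svp d loss a x \<mu> T = cost d loss x \<mu> + sqrt (2 * a T / real T * varc d loss x \<mu>)"

text \<open>Empirical distribution of the first T samples xi_1..xi_T = w!!0 .. w!!(T-1).\<close>
definition empirical :: "nat \<Rightarrow> nat stream \<Rightarrow> nat \<Rightarrow> real" where
  "empirical T \<omega> i = card {t. t < T \<and> \<omega> !! t = i} / real T"

definition elog :: "real \<Rightarrow> ereal" where
  "elog p = (if p = 0 then -\<infinity> else ereal (ln p))"

end

theory Submission
  imports Defs
begin

text \<open>On the failure event the true mean \<open>m\<close> exceeds \<open>\<^bold>c + sqrt (r v)\<close>, where \<open>\<^bold>c\<close> and \<open>v\<close> are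
  the empirical mean and variance and \<open>r = 2 a\<^sub>T / T\<close>. With the deficit \<open>D = m - \<^bold>c\<close> and the
  empirical second moment \<open>V\<close> about \<open>m\<close> one has \<open>v = V - D\<^sup>2\<close>, so either
  \<open>V \<le> (1 - \<epsilon>) \<sigma>\<^sup>2\<close> or \<open>D \<ge> sqrt (r (1 - \<epsilon>) \<sigma>\<^sup>2 / (1 + r))\<close>. The first is a large deviation of
  an average of bounded i.i.d. variables, of probability \<open>exp (- \<kappa> T) = o (exp (- a\<^sub>T))\<close> because
  \<open>a\<^sub>T / T \<rightarrow> 0\<close>. The second is a moderate deviation of order \<open>sqrt (a\<^sub>T / T)\<close>; a Chernoff bound
  with a second-order expansion of the moment generating function makes it
  \<open>exp (- (1 - \<epsilon> + o(1)) a\<^sub>T)\<close>. Letting \<open>\<epsilon> \<rightarrow> 0\<close> gives the rate \<open>-1\<close>.\<close>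

lemma exp_le_second_order: "exp (u::real) \<le> 1 + u + u\<^sup>2 / 2 * exp \<bar>u\<bar>"
proof -
  obtain t where t: "\<bar>t\<bar> \<le> \<bar>u\<bar>" "exp u = (\<Sum>m<2. u ^ m / fact m) + exp t / fact 2 * u ^ 2"
    using Maclaurin_exp_le[of u 2] by blast
  have "exp t / fact 2 * u ^ 2 \<le> u\<^sup>2 / 2 * exp \<bar>u\<bar>"
    using t(1) by (simp add: mult_right_mono mult.commute)
  moreover have "(\<Sum>m<2. u ^ m / fact m) = 1 + u" by (simp add: numeral_2_eq_2)
  ultimately show ?thesis using t(2) by linarith
qed

lemma centered_mgf_le:
  fixes p g :: "'i \<Rightarrow> real"
  assumes "finite A" "\<And>i. i \<in> A \<Longrightarrow> p i \<ge> 0" "(\<Sum>i\<in>A. p i) = 1"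
    and "(\<Sum>i\<in>A. p i * g i) = 0" "\<And>i. i \<in> A \<Longrightarrow> \<bar>g i\<bar> \<le> B" "l \<ge> 0"
  shows "(\<Sum>i\<in>A. p i * exp (l * g i)) \<le> exp (l\<^sup>2 * (\<Sum>i\<in>A. p i * (g i)\<^sup>2) * exp (l * B) / 2)"
proof -
  have "(\<Sum>i\<in>A. p i * exp (l * g i))
      \<le> (\<Sum>i\<in>A. p i * (1 + l * g i + (l * g i)\<^sup>2 / 2 * exp (l * B)))"
  proof (rule sum_mono)
    fix i assume i: "i \<in> A"
    have "exp \<bar>l * g i\<bar> \<le> exp (l * B)"
      using assms(5)[OF i] assms(6) by (simp add: abs_mult mult_left_mono)
    then have "exp (l * g i) \<le> 1 + l * g i + (l * g i)\<^sup>2 / 2 * exp (l * B)"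
      using exp_le_second_order[of "l * g i"]
      by (smt (verit) mult_left_mono zero_le_power2 divide_nonneg_pos)
    then show "p i * exp (l * g i) \<le> p i * (1 + l * g i + (l * g i)\<^sup>2 / 2 * exp (l * B))"
      using assms(2)[OF i] by (simp add: mult_left_mono)
  qed
  also have "\<dots> = (\<Sum>i\<in>A. p i) + l * (\<Sum>i\<in>A. p i * g i)
      + l\<^sup>2 * (\<Sum>i\<in>A. p i * (g i)\<^sup>2) * exp (l * B) / 2"
    by (simp add: sum.distrib sum_distrib_left sum_divide_distrib sum_distrib_right
        algebra_simps power2_eq_square)
  also have "\<dots> = 1 + l\<^sup>2 * (\<Sum>i\<in>A. p i * (g i)\<^sup>2) * exp (l * B) / 2"
    using assms by simp
  also have "\<dots> \<le> exp (l\<^sup>2 * (\<Sum>i\<in>A. p i * (g i)\<^sup>2) * exp (l * B) / 2)"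
    by (rule exp_ge_add_one_self)
  finally show ?thesis .
qed

lemma prob_space_stream_space_pmf: "prob_space (stream_space (measure_pmf P))"
  by (rule prob_space.prob_space_stream_space[OF prob_space_measure_pmf])

lemma borel_measurable_comp_snth [measurable]:
  "(\<lambda>\<omega>. g (\<omega> !! t)) \<in> borel_measurable (stream_space (count_space UNIV))"
  by (rule measurable_compose[OF measurable_snth]) simp

lemma nn_integral_exp_sum_stream_space:
  fixes P :: "'a pmf" and g :: "'a \<Rightarrow> real"
  shows "(\<integral>\<^sup>+\<omega>. ennreal (exp (l * (\<Sum>t<T. g (\<omega> !! t)))) \<partial>stream_space (measure_pmf P))
       = (\<integral>\<^sup>+y. ennreal (exp (l * g y)) \<partial>measure_pmf P) ^ T"
proof (induction T)
  case 0
  then show ?case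
    using prob_space.emeasure_space_1[OF prob_space_stream_space_pmf] by simp
next
  case (Suc T)
  let ?S = "stream_space (measure_pmf P)" and ?M = "\<integral>\<^sup>+y. ennreal (exp (l * g y)) \<partial>measure_pmf P"
  have "(\<integral>\<^sup>+\<omega>. ennreal (exp (l * (\<Sum>t<Suc T. g (\<omega> !! t)))) \<partial>?S)
      = (\<integral>\<^sup>+y. (\<integral>\<^sup>+\<omega>. ennreal (exp (l * (\<Sum>t<Suc T. g ((y ## \<omega>) !! t)))) \<partial>?S) \<partial>measure_pmf P)"
    by (rule prob_space.nn_integral_stream_space[OF prob_space_measure_pmf])
      measurable
  also have "\<dots> = (\<integral>\<^sup>+y. (\<integral>\<^sup>+\<omega>. ennreal (exp (l * g y))
      * ennreal (exp (l * (\<Sum>t<T. g (\<omega> !! t)))) \<partial>?S) \<partial>measure_pmf P)"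
    by (simp del: sum.lessThan_Suc add: sum.lessThan_Suc_shift distrib_left exp_add ennreal_mult)
  also have "\<dots> = (\<integral>\<^sup>+y. ennreal (exp (l * g y)) * ?M ^ T \<partial>measure_pmf P)"
    by (subst nn_integral_cmult) (auto simp: Suc.IH)
  also have "\<dots> = ?M ^ Suc T"
    by (subst nn_integral_multc) (auto simp: mult.commute)
  finally show ?case .
qed

lemma chernoff_stream_space:
  fixes P :: "'a pmf" and g :: "'a \<Rightarrow> real"
  assumes "finite A" "set_pmf P \<subseteq> A" "l \<ge> 0"
  shows "measure (stream_space (measure_pmf P))
      {\<omega> \<in> space (stream_space (measure_pmf P)). c \<le> (\<Sum>t<T. g (\<omega> !! t))}
     \<le> exp (- l * c) * (\<Sum>i\<in>A. pmf P i * exp (l * g i)) ^ T"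
proof -
  let ?S = "stream_space (measure_pmf P)"
  let ?E = "{\<omega> \<in> space ?S. c \<le> (\<Sum>t<T. g (\<omega> !! t))}"
  have "emeasure ?S ?E = (\<integral>\<^sup>+\<omega>. indicator ?E \<omega> \<partial>?S)"
    by (rule nn_integral_indicator[symmetric])
      measurable
  also have "\<dots> \<le> (\<integral>\<^sup>+\<omega>. ennreal (exp (- l * c)) * ennreal (exp (l * (\<Sum>t<T. g (\<omega> !! t)))) \<partial>?S)"
  proof (rule nn_integral_mono)
    fix \<omega>
    show "indicator ?E \<omega> \<le> ennreal (exp (- l * c)) * ennreal (exp (l * (\<Sum>t<T. g (\<omega> !! t))))"
    proof (cases "\<omega> \<in> ?E")
      case True
      then have "l * c \<le> l * (\<Sum>t<T. g (\<omega> !! t))"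
        using assms(3) by (simp add: mult_left_mono)
      then have "1 \<le> exp (- l * c) * exp (l * (\<Sum>t<T. g (\<omega> !! t)))"
        by (simp add: exp_add[symmetric])
      then show ?thesis using True by (simp add: ennreal_mult[symmetric])
    qed simp
  qed
  also have "\<dots> = ennreal (exp (- l * c)) * (\<integral>\<^sup>+y. ennreal (exp (l * g y)) \<partial>measure_pmf P) ^ T"
    by (subst nn_integral_cmult) (auto simp: nn_integral_exp_sum_stream_space)
  also have "(\<integral>\<^sup>+y. ennreal (exp (l * g y)) \<partial>measure_pmf P) = (\<Sum>i\<in>A. ennreal (exp (l * g i)) * pmf P i)"
    by (rule nn_integral_measure_pmf_support) (use assms in auto)
  also have "\<dots> = ennreal (\<Sum>i\<in>A. pmf P i * exp (l * g i))"
    by (subst sum_ennreal[symmetric]) (auto simp: ennreal_mult mult.commute)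
  finally have "emeasure ?S ?E \<le> ennreal (exp (- l * c) * (\<Sum>i\<in>A. pmf P i * exp (l * g i)) ^ T)"
    by (simp add: ennreal_mult ennreal_power sum_nonneg)
  then show ?thesis
    by (simp add: finite_measure.emeasure_eq_measure[OF prob_space.finite_measure[OF
          prob_space_stream_space_pmf]] sum_nonneg)
qed

lemma chernoff_stream_space_centered:
  fixes P :: "'a pmf" and g :: "'a \<Rightarrow> real"
  assumes "finite A" "set_pmf P \<subseteq> A" "l \<ge> 0"
    and "(\<Sum>i\<in>A. pmf P i * g i) = 0" "\<And>i. i \<in> A \<Longrightarrow> \<bar>g i\<bar> \<le> B"
  shows "measure (stream_space (measure_pmf P))
      {\<omega> \<in> space (stream_space (measure_pmf P)). c \<le> (\<Sum>t<T. g (\<omega> !! t))}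
     \<le> exp (- l * c + real T * (l\<^sup>2 * (\<Sum>i\<in>A. pmf P i * (g i)\<^sup>2) * exp (l * B) / 2))"
proof -
  let ?K = "l\<^sup>2 * (\<Sum>i\<in>A. pmf P i * (g i)\<^sup>2) * exp (l * B) / 2"
  have "(\<Sum>i\<in>A. pmf P i * exp (l * g i)) ^ T \<le> exp ?K ^ T"
    using assms sum_pmf_eq_1[OF assms(1,2)]
    by (intro power_mono centered_mgf_le) (auto intro: sum_nonneg)
  also have "\<dots> = exp (real T * ?K)"
    by (simp add: exp_of_nat_mult[symmetric])
  finally have "exp (- l * c) * (\<Sum>i\<in>A. pmf P i * exp (l * g i)) ^ T \<le> exp (- l * c) * exp (real T * ?K)"
    by (simp add: mult_left_mono)
  then have "exp (- l * c) * (\<Sum>i\<in>A. pmf P i * exp (l * g i)) ^ T \<le> exp (- l * c + real T * ?K)"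
    by (simp only: mult_exp_exp)
  with chernoff_stream_space[OF assms(1-3)] show ?thesis
    by (rule order_trans)
qed

lemma stream_space_sum_lower_deviation:
  fixes P :: "'a pmf" and f :: "'a \<Rightarrow> real"
  assumes "finite A" "set_pmf P \<subseteq> A" "\<mu> = (\<Sum>i\<in>A. pmf P i * f i)" "\<eta> > 0"
  obtains \<kappa> where "\<kappa> > 0" "\<And>T. measure (stream_space (measure_pmf P))
      {\<omega> \<in> space (stream_space (measure_pmf P)). (\<Sum>t<T. f (\<omega> !! t)) \<le> real T * (\<mu> - \<eta>)}
     \<le> exp (- \<kappa> * real T)"
proof -
  define g where "g i = \<mu> - f i" for i
  define B where "B = (\<Sum>i\<in>A. \<bar>g i\<bar>)"
  define V where "V = (\<Sum>i\<in>A. pmf P i * (g i)\<^sup>2)"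
  define l where "l = min 1 (\<eta> / (V * exp B + 1))"
  define \<kappa> where "\<kappa> = l * (\<eta> - l * V * exp (l * B) / 2)"
  have B: "\<bar>g i\<bar> \<le> B" if "i \<in> A" for i
    unfolding B_def by (rule member_le_sum) (use that assms(1) in auto)
  have "B \<ge> 0" "V \<ge> 0" by (simp_all add: B_def V_def sum_nonneg)
  have mean: "(\<Sum>i\<in>A. pmf P i * g i) = 0"
    using sum_pmf_eq_1[OF assms(1,2)] assms(3)
    by (simp add: g_def right_diff_distrib sum_subtractf flip: sum_distrib_right)
  have l: "0 < l" "l \<le> 1" "l * (V * exp B + 1) \<le> \<eta>"
  proof -
    have "0 < V * exp B + 1" using \<open>V \<ge> 0\<close> by (simp add: add_nonneg_pos)
    moreover have "l \<le> \<eta> / (V * exp B + 1)" by (simp add: l_def)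
    ultimately show "0 < l" "l \<le> 1" "l * (V * exp B + 1) \<le> \<eta>"
      using assms(4) by (auto simp: l_def le_divide_eq)
  qed
  have "l * V * exp (l * B) \<le> l * V * exp B"
    using l \<open>V \<ge> 0\<close> \<open>B \<ge> 0\<close> by (intro mult_left_mono) (auto simp: mult_left_le_one_le)
  also have "\<dots> < \<eta>"
    using l by (simp add: algebra_simps)
  finally have "l * V * exp (l * B) / 2 < \<eta>"
    using assms(4) by simp
  then have "\<kappa> > 0"
    using l by (simp add: \<kappa>_def)
  moreover have "measure (stream_space (measure_pmf P))
      {\<omega> \<in> space (stream_space (measure_pmf P)). (\<Sum>t<T. f (\<omega> !! t)) \<le> real T * (\<mu> - \<eta>)}
     \<le> exp (- \<kappa> * real T)" for T
  proof -
    have "(\<Sum>t<T. f (\<omega> !! t)) \<le> real T * (\<mu> - \<eta>) \<longleftrightarrow> real T * \<eta> \<le> (\<Sum>t<T. g (\<omega> !! t))" for \<omega>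
      by (simp add: g_def sum_subtractf algebra_simps)
    moreover have "- l * (real T * \<eta>) + real T * (l\<^sup>2 * V * exp (l * B) / 2) = - \<kappa> * real T"
      by (simp add: \<kappa>_def power2_eq_square algebra_simps)
    ultimately show ?thesis
      using chernoff_stream_space_centered[OF assms(1,2) _ mean B, of l "real T * \<eta>" T] l
      by (simp add: V_def)
  qed
  ultimately show thesis by (rule that)
qed

lemma stream_space_sum_moderate_deviation:
  fixes P :: "'a pmf" and g :: "'a \<Rightarrow> real"
  assumes "finite A" "set_pmf P \<subseteq> A"
    and "(\<Sum>i\<in>A. pmf P i * g i) = 0" "\<And>i. i \<in> A \<Longrightarrow> \<bar>g i\<bar> \<le> B"
    and V: "V = (\<Sum>i\<in>A. pmf P i * (g i)\<^sup>2)" "V > 0" and "s \<ge> 0"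
  shows "measure (stream_space (measure_pmf P))
      {\<omega> \<in> space (stream_space (measure_pmf P)). real T * s \<le> (\<Sum>t<T. g (\<omega> !! t))}
     \<le> exp (real T * s\<^sup>2 / V * (exp (s * B / V) / 2 - 1))"
proof -
  \<comment> \<open>\<open>s / V\<close> minimises the quadratic part of the Chernoff exponent.\<close>
  have "- (s / V) * (real T * s) + real T * ((s / V)\<^sup>2 * V * exp (s / V * B) / 2)
      = real T * s\<^sup>2 / V * (exp (s * B / V) / 2 - 1)"
    using \<open>V > 0\<close> by (simp add: field_simps power2_eq_square)
  then show ?thesis
    using chernoff_stream_space_centered[OF assms(1,2) _ assms(3,4), of "s / V" "real T * s" T] assms
    by simp
qed

lemma AE_stream_space_snth_in:
  fixes P :: "'a pmf"
  assumes "set_pmf P \<subseteq> A"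
  shows "AE \<omega> in stream_space (measure_pmf P). \<forall>t. \<omega> !! t \<in> A"
proof -
  have "AE \<omega> in stream_space (measure_pmf P). stream_all (\<lambda>i. i \<in> A) \<omega>"
    using AE_measure_pmf[of P] assms
    by (intro prob_space.AE_stream_all[OF prob_space_measure_pmf]) auto
  then show ?thesis by (simp add: sset_range)
qed

lemma sum_power2_diff_mean:
  fixes y :: "nat \<Rightarrow> real"
  assumes "T > 0"
  shows "(\<Sum>t<T. (y t - (\<Sum>t<T. y t) / T)\<^sup>2)
    = (\<Sum>t<T. (y t - m)\<^sup>2) - T * (m - (\<Sum>t<T. y t) / T)\<^sup>2"
proof -
  define c where "c = (\<Sum>t<T. y t) / T"
  have sum_dev: "(\<Sum>t<T. y t - m) = T * (c - m)"
    using assms by (simp add: c_def sum_subtractf algebra_simps)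
  have "(\<Sum>t<T. (y t - c)\<^sup>2) = (\<Sum>t<T. (y t - m)\<^sup>2 - 2 * (c - m) * (y t - m) + (c - m)\<^sup>2)"
    by (intro sum.cong refl) (simp add: power2_eq_square algebra_simps)
  also have "\<dots> = (\<Sum>t<T. (y t - m)\<^sup>2) - 2 * (c - m) * (\<Sum>t<T. y t - m) + T * (c - m)\<^sup>2"
    by (simp only: sum.distrib sum_subtractf sum_constant card_lessThan flip: sum_distrib_left)
  finally show ?thesis
    unfolding sum_dev c_def[symmetric] by (simp add: power2_eq_square algebra_simps)
qed

lemma mean_gt_upper_confidence_bound_cases:
  fixes y :: "nat \<Rightarrow> real"
  assumes "T > 0" "r \<ge> 0"
    and "m > (\<Sum>t<T. y t) / T + sqrt (r * ((\<Sum>t<T. (y t - (\<Sum>t<T. y t) / T)\<^sup>2) / T))"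
  shows "T * sqrt (r * v / (1 + r)) \<le> (\<Sum>t<T. m - y t) \<or> (\<Sum>t<T. (y t - m)\<^sup>2) \<le> T * v"
proof (rule disjCI)
  define D where "D = m - (\<Sum>t<T. y t) / T"
  define V where "V = (\<Sum>t<T. (y t - m)\<^sup>2) / T"
  assume "\<not> (\<Sum>t<T. (y t - m)\<^sup>2) \<le> T * v"
  then have "v < V"
    using assms(1) by (simp add: V_def field_simps)
  have var: "(\<Sum>t<T. (y t - (\<Sum>t<T. y t) / T)\<^sup>2) / T = V - D\<^sup>2"
    using assms(1) by (simp add: sum_power2_diff_mean[of T y m] V_def D_def diff_divide_distrib)
  then have "0 \<le> V - D\<^sup>2"
    by (metis divide_nonneg_nonneg of_nat_0_le_iff sum_nonneg zero_le_power2)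
  have sqrt_lt: "sqrt (r * (V - D\<^sup>2)) < D"
    using assms(3) by (simp add: var D_def)
  moreover have sqrt_nonneg: "0 \<le> sqrt (r * (V - D\<^sup>2))"
    using assms(2) \<open>0 \<le> V - D\<^sup>2\<close> by simp
  ultimately have "0 \<le> D"
    by linarith
  have "(sqrt (r * (V - D\<^sup>2)))\<^sup>2 < D\<^sup>2"
    using sqrt_lt sqrt_nonneg by (rule power_strict_mono) simp
  then have "r * (V - D\<^sup>2) < D\<^sup>2"
    using assms(2) \<open>0 \<le> V - D\<^sup>2\<close> by simp
  then have "r * v / (1 + r) \<le> D\<^sup>2"
    using assms(2) \<open>v < V\<close> mult_left_mono[of v V r]
    by (simp add: divide_le_eq algebra_simps)
  then have "sqrt (r * v / (1 + r)) \<le> D"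
    using \<open>0 \<le> D\<close> real_le_lsqrt by blast
  moreover have "(\<Sum>t<T. m - y t) = T * D"
    using assms(1) by (simp add: D_def sum_subtractf algebra_simps)
  ultimately show "T * sqrt (r * v / (1 + r)) \<le> (\<Sum>t<T. m - y t)"
    using assms(1) by simp
qed

lemma sum_mult_empirical:
  assumes "\<And>t. \<omega> !! t \<in> {1..d}"
  shows "(\<Sum>i\<in>{1..d}. f i * empirical T \<omega> i) = (\<Sum>t<T. f (\<omega> !! t)) / real T"
proof -
  have "(\<Sum>i\<in>{1..d}. f i * real (card {t. t \<in> {..<T} \<and> \<omega> !! t = i}))
      = (\<Sum>i\<in>{1..d}. \<Sum>t\<in>{t. t \<in> {..<T} \<and> \<omega> !! t = i}. f (\<omega> !! t))"
    by (intro sum.cong) auto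
  also have "\<dots> = (\<Sum>t<T. f (\<omega> !! t))"
    by (rule sum.group) (use assms in auto)
  finally show ?thesis
    by (simp add: empirical_def flip: sum_divide_distrib)
qed

lemma cost_empirical:
  assumes "\<And>t. \<omega> !! t \<in> {1..d}"
  shows "cost d loss x (empirical T \<omega>) = (\<Sum>t<T. loss x (\<omega> !! t)) / real T"
  unfolding cost_def by (rule sum_mult_empirical[OF assms])

lemma varc_empirical:
  assumes "\<And>t. \<omega> !! t \<in> {1..d}"
  shows "varc d loss x (empirical T \<omega>)
    = (\<Sum>t<T. (loss x (\<omega> !! t) - cost d loss x (empirical T \<omega>))\<^sup>2) / real T"
  using sum_mult_empirical[OF assms, of "\<lambda>i. (loss x i - cost d loss x (empirical T \<omega>))\<^sup>2" T]
  by (simp add: varc_def mult.commute)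

lemma varc_nonneg:
  assumes "\<And>i. \<mu> i \<ge> 0"
  shows "varc d loss x \<mu> \<ge> 0"
  unfolding varc_def using assms by (simp add: sum_nonneg)

lemma elog_div_le_ln_div:
  assumes "a > 0" "0 \<le> p" "p \<le> q" "q > 0"
  shows "elog p / ereal a \<le> ereal (ln q / a)"
proof (cases "p = 0")
  case True
  then show ?thesis using assms by (simp add: elog_def divide_ereal_def)
next
  case False
  then have "ln p / a \<le> ln q / a"
    using assms by (simp add: divide_right_mono)
  then show ?thesis using False assms by (simp add: elog_def)
qed

lemma limsup_elog_div_le:
  fixes p a :: "nat \<Rightarrow> real"
  assumes "filterlim a at_top sequentially" "\<And>T. 0 \<le> p T" "C > 0"
    and "eventually (\<lambda>T. p T \<le> C * exp (- b * a T)) sequentially"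
  shows "limsup (\<lambda>T. elog (p T) / ereal (a T)) \<le> ereal (- b)"
proof (rule ereal_le_epsilon2)
  fix e :: real assume "0 < e"
  have "eventually (\<lambda>T. max 1 (\<bar>ln C\<bar> / e) \<le> a T) sequentially"
    using assms(1) unfolding filterlim_at_top by blast
  then have "eventually (\<lambda>T. elog (p T) / ereal (a T) \<le> ereal (- b) + ereal e) sequentially"
    using assms(4)
  proof eventually_elim
    case (elim T)
    then have "0 < a T" "ln C \<le> e * a T"
      using \<open>0 < e\<close> by (auto simp: divide_le_eq mult.commute)
    have "elog (p T) / ereal (a T) \<le> ereal (ln (C * exp (- b * a T)) / a T)"
      using elim \<open>0 < a T\<close> assms(2,3) by (intro elog_div_le_ln_div) auto
    also have "ln (C * exp (- b * a T)) / a T = ln C / a T - b"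
      using \<open>0 < a T\<close> assms(3) by (simp add: ln_mult diff_divide_distrib)
    also have "ln C / a T \<le> e"
      using \<open>0 < a T\<close> \<open>ln C \<le> e * a T\<close> by (simp add: divide_le_eq)
    finally show ?case by simp
  qed
  then show "limsup (\<lambda>T. elog (p T) / ereal (a T)) \<le> ereal (- b) + ereal e"
    by (rule Limsup_bounded)
qed

lemma limsup_elog_div_le_neg_one:
  fixes p a :: "nat \<Rightarrow> real"
  assumes "filterlim a at_top sequentially" "\<And>T. 0 \<le> p T" "C > 0"
    and "\<And>b. 0 \<le> b \<Longrightarrow> b < 1 \<Longrightarrow> eventually (\<lambda>T. p T \<le> C * exp (- b * a T)) sequentially"
  shows "limsup (\<lambda>T. elog (p T) / ereal (a T)) \<le> -1"
proof (rule ereal_le_epsilon2)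
  fix e :: real assume "0 < e"
  define b where "b = max 0 (1 - e)"
  have "0 \<le> b" "b < 1" using \<open>0 < e\<close> by (auto simp: b_def)
  have "limsup (\<lambda>T. elog (p T) / ereal (a T)) \<le> ereal (- b)"
    using assms(1-3) assms(4)[OF \<open>0 \<le> b\<close> \<open>b < 1\<close>] by (rule limsup_elog_div_le)
  also have "ereal (- b) \<le> ereal (- 1 + e)"
    by (simp add: b_def)
  also have "\<dots> = -1 + ereal e"
    by (simp add: one_ereal_def)
  finally show "limsup (\<lambda>T. elog (p T) / ereal (a T)) \<le> -1 + ereal e" .
qed

definition svp_failure_prob ::
    "nat \<Rightarrow> ('x \<Rightarrow> nat \<Rightarrow> real) \<Rightarrow> (nat \<Rightarrow> real) \<Rightarrow> 'x \<Rightarrow> nat pmf \<Rightarrow> nat \<Rightarrow> real" where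
  "svp_failure_prob d loss a x P T = measure (stream_space (measure_pmf P))
     {\<omega> \<in> space (stream_space (measure_pmf P)). cost d loss x (pmf P) > svp d loss a x (empirical T \<omega>) T}"

lemma svp_failure_prob_le:
  fixes loss :: "'x \<Rightarrow> nat \<Rightarrow> real" and a :: "nat \<Rightarrow> real" and x :: 'x and P :: "nat pmf"
    and d T :: nat and v :: real
  assumes "set_pmf P \<subseteq> {1..d}" "T > 0" "a T \<ge> 0"
  defines "m \<equiv> cost d loss x (pmf P)" and "r \<equiv> 2 * a T / real T"
  shows "svp_failure_prob d loss a x P T
    \<le> measure (stream_space (measure_pmf P)) {\<omega> \<in> space (stream_space (measure_pmf P)).
          real T * sqrt (r * v / (1 + r)) \<le> (\<Sum>t<T. m - loss x (\<omega> !! t))}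
      + measure (stream_space (measure_pmf P)) {\<omega> \<in> space (stream_space (measure_pmf P)).
          (\<Sum>t<T. (loss x (\<omega> !! t) - m)\<^sup>2) \<le> real T * v}"
proof -
  let ?S = "stream_space (measure_pmf P)"
  let ?E1 = "{\<omega> \<in> space ?S. real T * sqrt (r * v / (1 + r)) \<le> (\<Sum>t<T. m - loss x (\<omega> !! t))}"
  let ?E2 = "{\<omega> \<in> space ?S. (\<Sum>t<T. (loss x (\<omega> !! t) - m)\<^sup>2) \<le> real T * v}"
  interpret prob_space ?S by (rule prob_space_stream_space_pmf)
  have "svp_failure_prob d loss a x P T \<le> measure ?S (?E1 \<union> ?E2)"
    unfolding svp_failure_prob_def m_def[symmetric]
  proof (rule finite_measure_mono_AE)
    show "AE \<omega> in ?S. \<omega> \<in> {\<omega> \<in> space ?S. m > svp d loss a x (empirical T \<omega>) T} \<longrightarrow> \<omega> \<in> ?E1 \<union> ?E2"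
      using AE_stream_space_snth_in[OF assms(1)]
    proof eventually_elim
      case (elim \<omega>)
      then have w: "\<And>t. \<omega> !! t \<in> {1..d}" by blast
      have "0 \<le> r" using assms(2,3) by (simp add: r_def)
      have "svp d loss a x (empirical T \<omega>) T = (\<Sum>t<T. loss x (\<omega> !! t)) / T
          + sqrt (r * ((\<Sum>t<T. (loss x (\<omega> !! t) - (\<Sum>t<T. loss x (\<omega> !! t)) / T)\<^sup>2) / T))"
        unfolding svp_def varc_empirical[OF w] cost_empirical[OF w] r_def ..
      then show ?case
        using mean_gt_upper_confidence_bound_cases[OF assms(2) \<open>0 \<le> r\<close>,
            where m = m and y = "\<lambda>t. loss x (\<omega> !! t)" and v = v]
        by auto
    qed
  qed measurable
  also have "\<dots> \<le> measure ?S ?E1 + measure ?S ?E2"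
    by (rule measure_Un_le) measurable
  finally show ?thesis .
qed

lemma svp_failure_prob_eq_0:
  assumes "set_pmf P \<subseteq> {1..d}" "varc d loss x (pmf P) = 0" "T > 0" "a T \<ge> 0"
  shows "svp_failure_prob d loss a x P T = 0"
proof -
  let ?S = "stream_space (measure_pmf P)" and ?m = "cost d loss x (pmf P)"
  interpret prob_space ?S by (rule prob_space_stream_space_pmf)
  have const: "loss x i = ?m" if "i \<in> set_pmf P" for i
  proof -
    have "(\<Sum>j\<in>{1..d}. pmf P j * (loss x j - ?m)\<^sup>2) = 0"
      using assms(2) by (simp add: varc_def)
    then have "pmf P i * (loss x i - ?m)\<^sup>2 = 0"
      using that assms(1) by (subst (asm) sum_nonneg_eq_0_iff) auto
    then show ?thesis
      using that by (simp add: set_pmf_iff)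
  qed
  have "svp_failure_prob d loss a x P T \<le> measure ?S {}"
    unfolding svp_failure_prob_def
  proof (rule finite_measure_mono_AE)
    show "AE \<omega> in ?S. \<omega> \<in> {\<omega> \<in> space ?S. ?m > svp d loss a x (empirical T \<omega>) T} \<longrightarrow> \<omega> \<in> {}"
      using AE_stream_space_snth_in[OF order_refl, of P]
    proof eventually_elim
      case (elim \<omega>)
      then have w: "\<And>t. \<omega> !! t \<in> {1..d}" using assms(1) by blast
      have "cost d loss x (empirical T \<omega>) = (\<Sum>t<T. ?m) / T"
        unfolding cost_empirical[OF w] using elim const by simp
      also have "\<dots> = ?m" using assms(3) by simp
      finally have "?m \<le> svp d loss a x (empirical T \<omega>) T"
        using assms(3,4) varc_nonneg[of "empirical T \<omega>" d loss x]
        by (simp add: svp_def empirical_def)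
      then show ?case by simp
    qed
  qed simp
  then show ?thesis
    by (simp add: svp_failure_prob_def measure_nonneg antisym)
qed

lemma svp_variance_tail_eventually_le:
  assumes "set_pmf P \<subseteq> {1..d}" "varc d loss x (pmf P) > 0" "0 < \<epsilon>" "b \<le> 1"
    and "eventually (\<lambda>T. 0 < a T) sequentially" "(\<lambda>T. a T / real T) \<longlonglongrightarrow> 0"
  shows "eventually (\<lambda>T. measure (stream_space (measure_pmf P))
      {\<omega> \<in> space (stream_space (measure_pmf P)).
        (\<Sum>t<T. (loss x (\<omega> !! t) - cost d loss x (pmf P))\<^sup>2) \<le> real T * ((1 - \<epsilon>) * varc d loss x (pmf P))}
     \<le> exp (- b * a T)) sequentially"
proof -
  let ?\<sigma>2 = "varc d loss x (pmf P)"
  obtain \<kappa> where "\<kappa> > 0" and tail: "\<And>T. measure (stream_space (measure_pmf P))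
      {\<omega> \<in> space (stream_space (measure_pmf P)).
        (\<Sum>t<T. (loss x (\<omega> !! t) - cost d loss x (pmf P))\<^sup>2) \<le> real T * (?\<sigma>2 - \<epsilon> * ?\<sigma>2)}
     \<le> exp (- \<kappa> * real T)"
    using stream_space_sum_lower_deviation[where A = "{1..d}" and P = P and \<mu> = ?\<sigma>2 and \<eta> = "\<epsilon> * ?\<sigma>2"
        and f = "\<lambda>i. (loss x i - cost d loss x (pmf P))\<^sup>2"] assms(1-3)
    by (auto simp: varc_def)
  have "eventually (\<lambda>T. a T / real T < \<kappa>) sequentially"
    using assms(6) \<open>\<kappa> > 0\<close> by (rule order_tendstoD(2))
  then show ?thesis
    using assms(5) eventually_gt_at_top[of 0]
  proof eventually_elim
    case (elim T)
    have "b * a T \<le> a T"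
      using assms(4) elim by (simp add: mult_le_cancel_right1)
    also have "a T \<le> \<kappa> * real T"
      using elim by (simp add: divide_less_eq mult.commute)
    finally have "exp (- \<kappa> * real T) \<le> exp (- b * a T)"
      by simp
    then show ?case
      using order_trans[OF tail[of T]] by (simp add: left_diff_distrib)
  qed
qed

lemma tendsto_moderate_deviation_exponent:
  fixes a :: "nat \<Rightarrow> real"
  assumes "\<sigma>2 > 0" "(\<lambda>T. a T / real T) \<longlonglongrightarrow> 0"
  shows "(\<lambda>T. 2 * (1 - \<epsilon>) * (exp (sqrt (2 * a T / real T * ((1 - \<epsilon>) * \<sigma>2) / (1 + 2 * a T / real T))
      * B / \<sigma>2) / 2 - 1) / (1 + 2 * a T / real T)) \<longlonglongrightarrow> - (1 - \<epsilon>)"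
proof -
  have r: "(\<lambda>T. 2 * a T / real T) \<longlonglongrightarrow> 2 * 0"
    unfolding times_divide_eq_right[symmetric] by (intro tendsto_intros assms(2))
  have "(\<lambda>T. 2 * (1 - \<epsilon>) * (exp (sqrt (2 * a T / real T * ((1 - \<epsilon>) * \<sigma>2) / (1 + 2 * a T / real T))
      * B / \<sigma>2) / 2 - 1) / (1 + 2 * a T / real T))
    \<longlonglongrightarrow> 2 * (1 - \<epsilon>) * (exp (sqrt (2 * 0 * ((1 - \<epsilon>) * \<sigma>2) / (1 + 2 * 0)) * B / \<sigma>2) / 2 - 1)
      / (1 + 2 * 0)"
    using assms(1) by (intro tendsto_intros r) auto
  also have "2 * (1 - \<epsilon>) * (exp (sqrt (2 * 0 * ((1 - \<epsilon>) * \<sigma>2) / (1 + 2 * 0)) * B / \<sigma>2) / 2 - 1)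
      / (1 + 2 * 0) = - (1 - \<epsilon>)"
    by (simp add: field_simps)
  finally show ?thesis .
qed

lemma svp_mean_tail_eventually_le:
  assumes "set_pmf P \<subseteq> {1..d}" "varc d loss x (pmf P) > 0" "0 \<le> \<epsilon>" "\<epsilon> \<le> 1" "b < 1 - \<epsilon>"
    and "eventually (\<lambda>T. 0 < a T) sequentially" "(\<lambda>T. a T / real T) \<longlonglongrightarrow> 0"
  shows "eventually (\<lambda>T. measure (stream_space (measure_pmf P))
      {\<omega> \<in> space (stream_space (measure_pmf P)).
        real T * sqrt (2 * a T / real T * ((1 - \<epsilon>) * varc d loss x (pmf P)) / (1 + 2 * a T / real T))
          \<le> (\<Sum>t<T. cost d loss x (pmf P) - loss x (\<omega> !! t))}
     \<le> exp (- b * a T)) sequentially"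
proof -
  define m where "m = cost d loss x (pmf P)"
  define \<sigma>2 where "\<sigma>2 = varc d loss x (pmf P)"
  define B where "B = (\<Sum>i\<in>{1..d}. \<bar>m - loss x i\<bar>)"
  define r where "r T = 2 * a T / real T" for T
  define s where "s T = sqrt (r T * ((1 - \<epsilon>) * \<sigma>2) / (1 + r T))" for T
  define h where "h T = 2 * (1 - \<epsilon>) * (exp (s T * B / \<sigma>2) / 2 - 1) / (1 + r T)" for T
  have "\<sigma>2 > 0"
    using assms(2) by (simp add: \<sigma>2_def)
  have mean: "(\<Sum>i\<in>{1..d}. pmf P i * (m - loss x i)) = 0"
    using sum_pmf_eq_1[OF _ assms(1)]
    by (simp add: m_def cost_def right_diff_distrib sum_subtractf mult.commute flip: sum_distrib_right)
  have var: "\<sigma>2 = (\<Sum>i\<in>{1..d}. pmf P i * (m - loss x i)\<^sup>2)"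
    by (simp add: \<sigma>2_def varc_def m_def power2_commute)
  have bound: "\<bar>m - loss x i\<bar> \<le> B" if "i \<in> {1..d}" for i
    unfolding B_def by (rule member_le_sum) (use that in auto)
  have "h \<longlonglongrightarrow> - (1 - \<epsilon>)"
    unfolding h_def s_def r_def using \<open>\<sigma>2 > 0\<close> assms(7) by (rule tendsto_moderate_deviation_exponent)
  then have "eventually (\<lambda>T. h T < - b) sequentially"
    using assms(5) by (intro order_tendstoD(2)) auto
  then show ?thesis
    using assms(6) eventually_gt_at_top[of 0]
  proof eventually_elim
    case (elim T)
    have "0 \<le> r T * ((1 - \<epsilon>) * \<sigma>2) / (1 + r T)"
      using elim assms(4) \<open>\<sigma>2 > 0\<close> by (simp add: r_def)
    then have "0 \<le> s T" "(s T)\<^sup>2 = r T * ((1 - \<epsilon>) * \<sigma>2) / (1 + r T)"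
      by (simp_all add: s_def)
    have "measure (stream_space (measure_pmf P))
        {\<omega> \<in> space (stream_space (measure_pmf P)). real T * s T \<le> (\<Sum>t<T. m - loss x (\<omega> !! t))}
      \<le> exp (real T * (s T)\<^sup>2 / \<sigma>2 * (exp (s T * B / \<sigma>2) / 2 - 1))"
      by (rule stream_space_sum_moderate_deviation[OF _ assms(1) mean bound var \<open>\<sigma>2 > 0\<close> \<open>0 \<le> s T\<close>])
        simp
    also have "real T * (s T)\<^sup>2 / \<sigma>2 = (real T * r T) * (1 - \<epsilon>) / (1 + r T)"
      using \<open>\<sigma>2 > 0\<close> \<open>(s T)\<^sup>2 = _\<close> by simp
    also have "real T * r T = 2 * a T"
      using elim by (simp add: r_def)
    also have "2 * a T * (1 - \<epsilon>) / (1 + r T) * (exp (s T * B / \<sigma>2) / 2 - 1) = a T * h T"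
      by (simp add: h_def)
    also have "exp (a T * h T) \<le> exp (- b * a T)"
      using elim mult_left_mono[of "h T" "- b" "a T"] by (simp add: mult.commute)
    finally show ?case
      by (simp add: m_def \<sigma>2_def s_def r_def)
  qed
qed

lemma svp_failure_prob_eventually_le:
  assumes "set_pmf P \<subseteq> {1..d}" "0 \<le> b" "b < 1"
    and "eventually (\<lambda>T. 0 < a T) sequentially" "(\<lambda>T. a T / real T) \<longlonglongrightarrow> 0"
  shows "eventually (\<lambda>T. svp_failure_prob d loss a x P T \<le> 2 * exp (- b * a T)) sequentially"
proof (cases "varc d loss x (pmf P) = 0")
  case True
  show ?thesis
    using assms(4) eventually_gt_at_top[of 0]
    by eventually_elim (simp add: svp_failure_prob_eq_0[OF assms(1) True])
next
  case False
  then have "varc d loss x (pmf P) > 0"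
    using varc_nonneg[of "pmf P"] by (simp add: order_less_le)
  define \<epsilon> where "\<epsilon> = (1 - b) / 2"
  have "0 < \<epsilon>" "\<epsilon> \<le> 1" "b < 1 - \<epsilon>"
    using assms(2,3) unfolding \<epsilon>_def by (simp_all add: field_simps)
  show ?thesis
    using svp_mean_tail_eventually_le[OF assms(1) \<open>varc d loss x (pmf P) > 0\<close>
        less_imp_le[OF \<open>0 < \<epsilon>\<close>] \<open>\<epsilon> \<le> 1\<close> \<open>b < 1 - \<epsilon>\<close> assms(4,5)]
      svp_variance_tail_eventually_le[OF assms(1) \<open>varc d loss x (pmf P) > 0\<close> \<open>0 < \<epsilon>\<close>
        less_imp_le[OF assms(3)] assms(4,5)]
      assms(4) eventually_gt_at_top[of 0]
  proof eventually_elim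
    case (elim T)
    then have "0 \<le> a T" by simp
    from elim show ?case
      using svp_failure_prob_le[where a = a and v = "(1 - \<epsilon>) * varc d loss x (pmf P)",
          OF assms(1) \<open>0 < T\<close> \<open>0 \<le> a T\<close>, of loss x]
      by linarith
  qed
qed

theorem mainTheorem6:
  fixes d :: nat
    and X :: "'a::euclidean_space set"
    and loss :: "'a \<Rightarrow> nat \<Rightarrow> real"
    and a :: "nat \<Rightarrow> real"
  assumes d2: "d \<ge> 2"
    and X_compact: "compact X"
    and loss_cont: "\<And>i. i \<in> {1..d} \<Longrightarrow> continuous_on X (\<lambda>x. loss x i)"
    and a_pos: "\<And>T. T \<ge> 1 \<Longrightarrow> a T > 0"
    and a_inf: "filterlim a at_top sequentially"
    and subexp: "(\<lambda>T. a T / real T) \<longlonglongrightarrow> 0"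
  shows "\<forall>x\<in>X. \<forall>P :: nat pmf. set_pmf P = {1..d} \<longrightarrow>
           limsup (\<lambda>T. elog (measure (stream_space (measure_pmf P))
              {\<omega> \<in> space (stream_space (measure_pmf P)).
                 cost d loss x (pmf P) > svp d loss a x (empirical T \<omega>) T}) / ereal (a T))
           \<le> -1"
proof (intro ballI allI impI)
  fix x and P :: "nat pmf"
  assume "set_pmf P = {1..d}"
  then have P: "set_pmf P \<subseteq> {1..d}" by simp
  have a_ev: "eventually (\<lambda>T. 0 < a T) sequentially"
    using a_inf by (simp add: filterlim_at_top_dense)
  have "limsup (\<lambda>T. elog (svp_failure_prob d loss a x P T) / ereal (a T)) \<le> -1"
    by (rule limsup_elog_div_le_neg_one[OF a_inf _ _ svp_failure_prob_eventually_le[OF P _ _ a_ev subexp]])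
      (simp_all add: svp_failure_prob_def)
  then show "limsup (\<lambda>T. elog (measure (stream_space (measure_pmf P))
      {\<omega> \<in> space (stream_space (measure_pmf P)). cost d loss x (pmf P) > svp d loss a x (empirical T \<omega>) T})
      / ereal (a T)) \<le> -1"
    by (simp add: svp_failure_prob_def)
qed

end
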